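(* Let $K$ be a nonempty finite set, $X=\Delta(K)$, and let $u,v\in\Delta(X)$ have finite supports $U$ and $V$. Then $d_3(u,v)\ge d_5(u,v)$.
   Context: $X=\Delta(K)\subset\mathbb R^K$ with $\|p\|_1=\sum_k|p^k|$. $\mathcal M_3(u,v)$ is the set of finite positive Borel measures $\gamma$ on $X^2\times[0,1]^2$ such that for all continuous $f:X\to\mathbb R$: - $\int\lambda f(x)\,d\gamma(x,y,\lambda,\mu)=u(f)$, and - $\int\mu f(y)\,d\gamma=v(f)$. Then $d_3(u,v)=\inf_{\gamma\in\mathcal M_3(u,v)}\int\|\lambda x-\mu y\|_1\,d\gamma$. $\mathcal M_5(u,v)$ is the set of $(\alpha,\beta)\in(\mathbb R_+^{U\times V})^2$ with: - $\sum_{y'\in V}\alpha(x,y')\le u(x)$ for all $x\in U$, and - $\sum_{x'\in U}\beta(x',y)\le v(y)$ for all $y\in V$. Then $$d_5(u,v)=\inf_{(\alpha,\beta)\in\mathcal M_5(u,v)}\Big(2+\sum_{(x,y)\in U\times V}\big(\|\alpha(x,y)x-\beta(x,y)y\|_1-\alpha(x,y)-\beta(x,y)\big)\Big).$$ *)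

theory Defs
  imports "HOL-Probability.Probability"
begin

text \<open>K is modelled by a finite (hence nonempty) type 'k; points of R^K are real^'k.\<close>

definition l1norm :: "real ^ 'k::finite \<Rightarrow> real" where
  "l1norm p = (\<Sum>k\<in>UNIV. \<bar>p $ k\<bar>)"

definition DeltaK :: "(real ^ 'k::finite) set" where
  "DeltaK = {p. (\<forall>k. 0 \<le> p $ k) \<and> (\<Sum>k\<in>UNIV. p $ k) = 1}"

definition space3 :: "((real ^ 'k::finite) \<times> (real ^ 'k) \<times> real \<times> real) set" where
  "space3 = DeltaK \<times> DeltaK \<times> {0..1} \<times> {0..1}"

definition M3 :: "(real ^ 'k::finite) pmf \<Rightarrow> (real ^ 'k) pmf
    \<Rightarrow> ((real ^ 'k) \<times> (real ^ 'k) \<times> real \<times> real) measure set" where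
  "M3 u v = {\<gamma>. sets \<gamma> = sets (restrict_space borel space3) \<and> space \<gamma> = space3 \<and>
      finite_measure \<gamma> \<and>
      (\<forall>f. continuous_on DeltaK f \<longrightarrow>
          integral\<^sup>L \<gamma> (\<lambda>(x,y,l,m). l * f x) = measure_pmf.expectation u f \<and>
          integral\<^sup>L \<gamma> (\<lambda>(x,y,l,m). m * f y) = measure_pmf.expectation v f)}"

definition d3 :: "(real ^ 'k::finite) pmf \<Rightarrow> (real ^ 'k) pmf \<Rightarrow> real" where
  "d3 u v = Inf ((\<lambda>\<gamma>. integral\<^sup>L \<gamma> (\<lambda>(x,y,l,m). l1norm (l *\<^sub>R x - m *\<^sub>R y))) ` M3 u v)"

text \<open>M_5(u,v): nonnegative alpha, beta on U x V (U, V the supports), with row/column bounds.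
  Values outside U x V are irrelevant.\<close>
definition M5 :: "(real ^ 'k::finite) pmf \<Rightarrow> (real ^ 'k) pmf
    \<Rightarrow> (((real ^ 'k) \<Rightarrow> (real ^ 'k) \<Rightarrow> real) \<times> ((real ^ 'k) \<Rightarrow> (real ^ 'k) \<Rightarrow> real)) set" where
  "M5 u v = {(\<alpha>,\<beta>).
      (\<forall>x\<in>set_pmf u. \<forall>y\<in>set_pmf v. 0 \<le> \<alpha> x y \<and> 0 \<le> \<beta> x y) \<and>
      (\<forall>x\<in>set_pmf u. (\<Sum>y'\<in>set_pmf v. \<alpha> x y') \<le> pmf u x) \<and>
      (\<forall>y\<in>set_pmf v. (\<Sum>x'\<in>set_pmf u. \<beta> x' y) \<le> pmf v y)}"

definition d5 :: "(real ^ 'k::finite) pmf \<Rightarrow> (real ^ 'k) pmf \<Rightarrow> real" where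
  "d5 u v = Inf ((\<lambda>(\<alpha>,\<beta>). 2 + (\<Sum>(x,y)\<in>set_pmf u \<times> set_pmf v.
        l1norm (\<alpha> x y *\<^sub>R x - \<beta> x y *\<^sub>R y) - \<alpha> x y - \<beta> x y)) ` M5 u v)"

end

theory Submission
  imports Defs
begin

(* Given any gamma in M_3(u,v), read off a plan for d_5: let alpha a b and beta a b be the
   integrals of l and of m over the cell {x = a, y = b}.  The marginal conditions of gamma,
   tested against continuous bumps, bound the weight at each atom, so (alpha, beta) lies in
   M_5(u,v).  On each cell, Jensen gives ||alpha a b a - beta a b b||_1 <= the d_3 cost there;
   off the cells, ||l x - m y||_1 >= |l - m|, and since the l- and m-weights have total mass 1
   and none of it lies off the supports, the cost outside the cells is at least the weight not
   used by alpha and beta.  Adding up, the d_5 objective of (alpha, beta) is at most the d_3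
   cost of gamma; taking infima gives the theorem. *)

lemma DeltaK_nonneg: "x \<in> DeltaK \<Longrightarrow> 0 \<le> x $ k"
  by (simp add: DeltaK_def)

lemma DeltaK_sum: "x \<in> DeltaK \<Longrightarrow> (\<Sum>k\<in>UNIV. x $ k) = 1"
  by (simp add: DeltaK_def)

lemma l1norm_nonneg: "0 \<le> l1norm p"
  by (simp add: l1norm_def sum_nonneg)

lemma l1norm_scaleR: "l1norm (c *\<^sub>R p) = \<bar>c\<bar> * l1norm p"
  by (simp add: l1norm_def abs_mult sum_distrib_left)

(* Summing coordinates: for x, y in the simplex, |l - m| <= ||l x - m y||_1.  This is the
   cost paid by the part of a coupling that d_5 does not transport. *)
lemma l1norm_ge_abs_diff:
  assumes "x \<in> DeltaK" "y \<in> DeltaK"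
  shows "\<bar>l - m\<bar> \<le> l1norm (l *\<^sub>R x - m *\<^sub>R y)"
proof -
  have "l - m = (\<Sum>k\<in>UNIV. l * x $ k - m * y $ k)"
    using assms by (simp add: DeltaK_sum sum_subtractf sum_distrib_left[symmetric])
  also have "\<bar>\<dots>\<bar> \<le> (\<Sum>k\<in>UNIV. \<bar>l * x $ k - m * y $ k\<bar>)"
    by (rule sum_abs)
  finally show ?thesis
    by (simp add: l1norm_def)
qed

lemma l1norm_le_sum_weights:
  assumes "x \<in> DeltaK" "y \<in> DeltaK" "0 \<le> l" "0 \<le> m"
  shows "l1norm (l *\<^sub>R x - m *\<^sub>R y) \<le> l + m"
proof -
  have "l1norm (l *\<^sub>R x - m *\<^sub>R y) = (\<Sum>k\<in>UNIV. \<bar>l * x $ k - m * y $ k\<bar>)"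
    by (simp add: l1norm_def)
  also have "\<dots> \<le> (\<Sum>k\<in>UNIV. l * x $ k + m * y $ k)"
    using assms by (intro sum_mono) (simp add: DeltaK_nonneg abs_le_iff)
  also have "\<dots> = l + m"
    using assms by (simp add: DeltaK_sum sum.distrib sum_distrib_left[symmetric])
  finally show ?thesis .
qed

lemma l1norm_integral_le:
  fixes F :: "'a \<Rightarrow> real ^ 'k::finite"
  assumes "\<And>k. integrable M (\<lambda>p. F p $ k)"
  shows "l1norm (\<chi> k. integral\<^sup>L M (\<lambda>p. F p $ k)) \<le> integral\<^sup>L M (\<lambda>p. l1norm (F p))"
proof -
  have "l1norm (\<chi> k. integral\<^sup>L M (\<lambda>p. F p $ k)) = (\<Sum>k\<in>UNIV. \<bar>integral\<^sup>L M (\<lambda>p. F p $ k)\<bar>)"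
    by (simp add: l1norm_def)
  also have "\<dots> \<le> (\<Sum>k\<in>UNIV. integral\<^sup>L M (\<lambda>p. \<bar>F p $ k\<bar>))"
    by (intro sum_mono integral_abs_bound)
  also have "\<dots> = integral\<^sup>L M (\<lambda>p. l1norm (F p))"
    using assms by (simp add: l1norm_def Bochner_Integration.integral_sum)
  finally show ?thesis .
qed

lemma sum_indicator_singletons:
  assumes "finite A"
  shows "(\<Sum>a\<in>A. indicator {a} x :: real) = indicator A x"
  using assms by (simp add: indicator_def sum.delta)

(* Pointwise form of the cost split: on the cells of U x V the integrand h - l - m is
   counted, elsewhere h is bounded below by l + m minus the weight lying outside U resp. V. *)
lemma cost_split_pointwise:
  fixes h l m :: real
  assumes "0 \<le> l" "0 \<le> m" "\<bar>l - m\<bar> \<le> h"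
  shows "indicator U x * indicator V y * (h - l - m) + l + m
      - 2 * (l * indicator (- U) x) - 2 * (m * indicator (- V) y) \<le> h"
  using assms by (auto simp: indicator_def)

(* Both marginal conditions of M_3 are of this form. *)
locale weighted_marginal = finite_measure M
  for M :: "'b measure" +
  fixes L :: "'b \<Rightarrow> real" and X :: "'b \<Rightarrow> 'a::metric_space" and w :: "'a pmf"
  assumes L_measurable: "L \<in> borel_measurable M"
    and X_measurable: "X \<in> borel_measurable M"
    and L_unit: "\<And>p. p \<in> space M \<Longrightarrow> 0 \<le> L p \<and> L p \<le> 1"
    and finite_support: "finite (set_pmf w)"
    and pushforward: "\<And>f. continuous_on UNIV f \<Longrightarrow>
      integral\<^sup>L M (\<lambda>p. L p * f (X p)) = measure_pmf.expectation w f"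
begin

lemma integrable_weighted:
  assumes "g \<in> borel_measurable M" "\<And>p. p \<in> space M \<Longrightarrow> \<bar>g p\<bar> \<le> 1"
  shows "integrable M (\<lambda>p. L p * g p)"
proof (rule integrable_const_bound[where B=1])
  show "AE p in M. norm (L p * g p) \<le> 1"
    using L_unit assms(2) by (intro AE_I2) (simp add: abs_mult mult_le_one)
qed (use L_measurable assms(1) in measurable)

lemma integrable_L: "integrable M L"
  using integrable_weighted[of "\<lambda>_. 1"] by simp

lemma integrable_off_support: "integrable M (\<lambda>p. L p * indicator (- set_pmf w) (X p))"
proof (rule integrable_weighted)
  show "(\<lambda>p. indicator (- set_pmf w) (X p)) \<in> borel_measurable M"
    using finite_support
    by (intro measurable_compose[OF X_measurable borel_measurable_indicator] borel_open
        open_Compl finite_imp_closed)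
qed simp

lemma total_weight: "integral\<^sup>L M L = 1"
  using pushforward[of "\<lambda>_. 1"] by simp

(* The weight sitting at a point x0 is at most w{x0}: test against a continuous bump that
   equals 1 at x0 and vanishes on the other (finitely many, isolated) atoms of w. *)
lemma atom_weight_le:
  assumes g: "g \<in> borel_measurable M"
    and g_le: "\<And>p. p \<in> space M \<Longrightarrow> 0 \<le> g p \<and> g p \<le> indicator {x0} (X p)"
  shows "integral\<^sup>L M (\<lambda>p. L p * g p) \<le> pmf w x0"
proof -
  obtain d where d: "d > 0" "\<And>a. a \<in> set_pmf w \<Longrightarrow> a \<noteq> x0 \<Longrightarrow> d \<le> dist x0 a"
    using finite_set_avoid[OF finite_support, of x0] by blast
  define bump where "bump = (\<lambda>z. max 0 (1 - dist z x0 / d))"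
  have bump_cont: "continuous_on UNIV bump"
    unfolding bump_def by (intro continuous_intros) (use d in auto)
  have "measure_pmf.expectation w bump = (\<Sum>a\<in>{x0}. bump a * pmf w a)"
  proof (rule integral_measure_pmf_real)
    fix a assume "a \<in> set_pmf w" "bump a \<noteq> 0"
    then show "a \<in> {x0}"
      using d by (force simp: bump_def dist_commute field_simps)
  qed simp
  then have bump_expectation: "measure_pmf.expectation w bump = pmf w x0"
    by (simp add: bump_def)
  have "integral\<^sup>L M (\<lambda>p. L p * g p) \<le> integral\<^sup>L M (\<lambda>p. L p * bump (X p))"
  proof (rule integral_mono)
    show "integrable M (\<lambda>p. L p * g p)"
    proof (rule integrable_weighted[OF g])
      fix p assume "p \<in> space M"
      then show "\<bar>g p\<bar> \<le> 1"
        using g_le[of p] by (cases "X p = x0") auto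
    qed
    show "integrable M (\<lambda>p. L p * bump (X p))"
      using d(1) X_measurable borel_measurable_continuous_onI[OF bump_cont]
      by (intro integrable_weighted) (auto simp: bump_def)
    fix p assume p: "p \<in> space M"
    have "g p \<le> bump (X p)"
      using g_le[OF p] by (cases "X p = x0") (auto simp: bump_def)
    then show "L p * g p \<le> L p * bump (X p)"
      using L_unit[OF p] by (simp add: mult_left_mono)
  qed
  also have "\<dots> = pmf w x0"
    using pushforward[OF bump_cont] bump_expectation by simp
  finally show ?thesis .
qed

(* No weight lies outside the support of w: test against min 1 (n * dist(., supp w)),
   which has w-expectation 0 and increases to the indicator of the complement. *)
lemma no_weight_off_support:
  "integral\<^sup>L M (\<lambda>p. L p * indicator (- set_pmf w) (X p)) = 0"
proof -
  let ?W = "set_pmf w"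
  define s where "s = (\<lambda>n::nat. \<lambda>p. L p * min 1 (real n * infdist (X p) ?W))"
  define F where "F = (\<lambda>p. L p * indicator (- ?W) (X p))"
  have s_cont: "continuous_on UNIV (\<lambda>z. min 1 (real n * infdist z ?W))" for n
    by (intro continuous_intros continuous_on_infdist)
  have closed_W: "closed ?W"
    using finite_support by (rule finite_imp_closed)
  have s_zero: "integral\<^sup>L M (s n) = 0" for n
  proof -
    have "integral\<^sup>L M (s n) = measure_pmf.expectation w (\<lambda>z. min 1 (real n * infdist z ?W))"
      unfolding s_def by (rule pushforward[OF s_cont])
    also have "\<dots> = (\<Sum>a\<in>{}. min 1 (real n * infdist a ?W) * pmf w a)"
      by (rule integral_measure_pmf_real) (auto simp: infdist_zero)
    finally show ?thesis by simp
  qed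
  have pointwise_limit: "(\<lambda>n. s n p) \<longlonglongrightarrow> F p" for p
  proof (cases "X p \<in> ?W")
    case True
    then show ?thesis by (simp add: s_def F_def infdist_zero)
  next
    case False
    have pos: "infdist (X p) ?W > 0"
      using infdist_pos_not_in_closed[OF closed_W set_pmf_not_empty False] .
    obtain N :: nat where N: "1 / infdist (X p) ?W < real N"
      using reals_Archimedean2 by blast
    have "s n p = F p" if "N \<le> n" for n
    proof -
      have "1 / infdist (X p) ?W < real n" using N that by linarith
      then have "1 \<le> real n * infdist (X p) ?W" using pos by (simp add: field_simps)
      then show ?thesis using False by (simp add: s_def F_def)
    qed
    then show ?thesis
      by (intro tendsto_eventually) (auto simp: eventually_sequentially)
  qed
  have "(\<lambda>n. integral\<^sup>L M (s n)) \<longlonglongrightarrow> integral\<^sup>L M F"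
  proof (rule integral_dominated_convergence[OF _ _ integrable_L])
    show "F \<in> borel_measurable M"
      unfolding F_def using L_measurable X_measurable closed_W by measurable
    show "s n \<in> borel_measurable M" for n
      unfolding s_def using L_measurable X_measurable borel_measurable_continuous_onI[OF s_cont]
      by measurable
    show "AE p in M. (\<lambda>n. s n p) \<longlonglongrightarrow> F p"
      using pointwise_limit by simp
    show "AE p in M. norm (s n p) \<le> L p" for n
      using L_unit by (intro AE_I2) (auto simp: s_def abs_mult infdist_nonneg intro!: mult_left_le)
  qed
  then have "(\<lambda>n. 0::real) \<longlonglongrightarrow> integral\<^sup>L M F"
    by (simp add: s_zero)
  then show ?thesis
    unfolding F_def using LIMSEQ_unique tendsto_const by blast
qed

end

type_synonym 'k quad = "(real ^ 'k) \<times> (real ^ 'k) \<times> real \<times> real"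

abbreviation pt_x :: "'k::finite quad \<Rightarrow> real ^ 'k" where "pt_x \<equiv> fst"
abbreviation pt_y :: "'k::finite quad \<Rightarrow> real ^ 'k" where "pt_y p \<equiv> fst (snd p)"
abbreviation pt_l :: "'k::finite quad \<Rightarrow> real" where "pt_l p \<equiv> fst (snd (snd p))"
abbreviation pt_m :: "'k::finite quad \<Rightarrow> real" where "pt_m p \<equiv> snd (snd (snd p))"

definition cost3 :: "'k::finite quad \<Rightarrow> real" where
  "cost3 p = l1norm (pt_l p *\<^sub>R pt_x p - pt_m p *\<^sub>R pt_y p)"

lemma cost3_case: "(\<lambda>(x, y, l, m). l1norm (l *\<^sub>R x - m *\<^sub>R y)) = cost3"
  by (auto simp: cost3_def)

definition cell :: "real ^ 'k \<Rightarrow> real ^ 'k \<Rightarrow> 'k::finite quad \<Rightarrow> real" where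
  "cell a b = indicator ({a} \<times> {b} \<times> UNIV)"

lemma cell_eq: "cell a b p = indicator {a} (pt_x p) * indicator {b} (pt_y p)"
  by (cases p) (auto simp: cell_def indicator_def)

lemma sum_cells_row:
  "finite B \<Longrightarrow> (\<Sum>b\<in>B. cell a b p) = indicator {a} (pt_x p) * indicator B (pt_y p)"
  by (simp add: cell_eq sum_distrib_left[symmetric] sum_indicator_singletons)

lemma sum_cells_column:
  "finite A \<Longrightarrow> (\<Sum>a\<in>A. cell a b p) = indicator A (pt_x p) * indicator {b} (pt_y p)"
  by (simp add: cell_eq sum_distrib_right[symmetric] sum_indicator_singletons)

lemma sum_cells:
  assumes "finite A" "finite B"
  shows "(\<Sum>(a, b)\<in>A \<times> B. cell a b p) = indicator A (pt_x p) * indicator B (pt_y p)"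
  using assms by (simp add: sum.cartesian_product[symmetric] sum_cells_row
      sum_distrib_right[symmetric] sum_indicator_singletons)

lemma cell_measurable: "cell a b \<in> borel_measurable borel"
  unfolding cell_def by (intro borel_measurable_indicator borel_closed closed_Times closed_singleton closed_UNIV)

lemma cost3_continuous: "continuous_on UNIV (cost3 :: 'k::finite quad \<Rightarrow> real)"
  unfolding cost3_def l1norm_def by (intro continuous_intros)

lemma cost3_nonneg: "0 \<le> cost3 p"
  by (simp add: cost3_def l1norm_nonneg)

lemma space3_coordinates:
  assumes "p \<in> space3"
  shows "pt_x p \<in> DeltaK" "pt_y p \<in> DeltaK" "0 \<le> pt_l p" "pt_l p \<le> 1" "0 \<le> pt_m p" "pt_m p \<le> 1"
  using assms by (auto simp: space3_def)

lemma cost3_bounds: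
  assumes "p \<in> space3"
  shows "\<bar>pt_l p - pt_m p\<bar> \<le> cost3 p" "cost3 p \<le> 2"
  using space3_coordinates[OF assms] l1norm_ge_abs_diff l1norm_le_sum_weights
  by (fastforce simp: cost3_def)+

(* M_3(u,v) is nonempty: push the product u (x) v forward along (x, y) |-> (x, y, 1, 1).
   This makes the infimum defining d_3 a proper one. *)
lemma M3_nonempty:
  fixes u v :: "(real ^ 'k::finite) pmf"
  assumes u_simplex: "set_pmf u \<subseteq> DeltaK" and v_simplex: "set_pmf v \<subseteq> DeltaK"
  shows "M3 u v \<noteq> {}"
proof -
  obtain e where "e \<in> set_pmf u"
    using set_pmf_not_empty[of u] by blast
  then have e: "e \<in> DeltaK"
    using u_simplex by blast
  define N :: "'k quad measure" where "N = restrict_space borel space3"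
  define g :: "(real ^ 'k) \<times> (real ^ 'k) \<Rightarrow> 'k quad" where
    "g z = (if fst z \<in> DeltaK \<and> snd z \<in> DeltaK then (fst z, snd z, 1, 1) else (e, e, 1, 1))" for z
  have space_N: "space N = space3"
    by (simp add: N_def space_restrict_space)
  have g_measurable: "g \<in> measure_pmf (pair_pmf u v) \<rightarrow>\<^sub>M N"
    unfolding measurable_pmf_measure1 space_N using e by (auto simp: g_def space3_def)
  define \<gamma> where "\<gamma> = distr (measure_pmf (pair_pmf u v)) N g"
  have push: "integral\<^sup>L \<gamma> h = measure_pmf.expectation (pair_pmf u v) (\<lambda>z. h (fst z, snd z, 1, 1))"
    if "continuous_on space3 h" for h :: "'k quad \<Rightarrow> real"
  proof -
    have "integral\<^sup>L \<gamma> h = measure_pmf.expectation (pair_pmf u v) (\<lambda>z. h (g z))"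
      unfolding \<gamma>_def using borel_measurable_continuous_on_restrict[OF that] g_measurable
      by (subst integral_distr) (auto simp: N_def)
    also have "\<dots> = measure_pmf.expectation (pair_pmf u v) (\<lambda>z. h (fst z, snd z, 1, 1))"
      using u_simplex v_simplex by (intro integral_cong_AE) (auto simp: g_def AE_measure_pmf_iff)
    finally show ?thesis .
  qed
  have "\<gamma> \<in> M3 u v"
    unfolding M3_def
  proof (intro CollectI conjI allI impI)
    show "sets \<gamma> = sets (restrict_space borel space3)" "space \<gamma> = space3"
      by (simp_all add: \<gamma>_def N_def space_N[unfolded N_def])
    show "finite_measure \<gamma>"
      unfolding \<gamma>_def using g_measurable measure_pmf.prob_space_axioms
      by (intro prob_space.finite_measure prob_space.prob_space_distr)
  next
    fix f :: "real ^ 'k \<Rightarrow> real"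
    assume f: "continuous_on DeltaK f"
    have "continuous_on space3 (\<lambda>p. pt_l p * f (pt_x p))"
      and "continuous_on space3 (\<lambda>p. pt_m p * f (pt_y p))"
      by (intro continuous_intros continuous_on_compose2[OF f]; force simp: space3_def)+
    moreover have "(\<lambda>(x, y, l, m). l * f x) = (\<lambda>p. pt_l p * f (pt_x p))"
      and "(\<lambda>(x, y, l, m). m * f y) = (\<lambda>p. pt_m p * f (pt_y p))"
      by auto
    moreover have "measure_pmf.expectation (pair_pmf u v) (\<lambda>z. f (fst z)) = measure_pmf.expectation u f"
      and "measure_pmf.expectation (pair_pmf u v) (\<lambda>z. f (snd z)) = measure_pmf.expectation v f"
      by (metis integral_map_pmf map_fst_pair_pmf, metis integral_map_pmf map_snd_pair_pmf)
    ultimately show "integral\<^sup>L \<gamma> (\<lambda>(x, y, l, m). l * f x) = measure_pmf.expectation u f"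
      and "integral\<^sup>L \<gamma> (\<lambda>(x, y, l, m). m * f y) = measure_pmf.expectation v f"
      by (simp_all add: push)
  qed
  then show ?thesis by blast
qed

definition objective5 :: "(real ^ 'k::finite) pmf \<Rightarrow> (real ^ 'k) pmf
    \<Rightarrow> (real ^ 'k \<Rightarrow> real ^ 'k \<Rightarrow> real) \<Rightarrow> (real ^ 'k \<Rightarrow> real ^ 'k \<Rightarrow> real) \<Rightarrow> real" where
  "objective5 u v \<alpha> \<beta> = 2 + (\<Sum>(x, y)\<in>set_pmf u \<times> set_pmf v.
      l1norm (\<alpha> x y *\<^sub>R x - \<beta> x y *\<^sub>R y) - \<alpha> x y - \<beta> x y)"

(* The objective of d_5 is nonnegative, since alpha and beta have total mass at most one;
   in particular d_5 is an infimum of a set bounded below. *)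
lemma objective5_nonneg:
  fixes u v :: "(real ^ 'k::finite) pmf"
  assumes u_finite: "finite (set_pmf u)" and v_finite: "finite (set_pmf v)"
    and plan: "(\<alpha>, \<beta>) \<in> M5 u v"
  shows "0 \<le> objective5 u v \<alpha> \<beta>"
proof -
  let ?U = "set_pmf u" and ?V = "set_pmf v"
  have "(\<Sum>(x, y)\<in>?U \<times> ?V. \<alpha> x y) = (\<Sum>x\<in>?U. \<Sum>y\<in>?V. \<alpha> x y)"
    by (simp add: sum.cartesian_product)
  also have "\<dots> \<le> (\<Sum>x\<in>?U. pmf u x)"
    using plan by (intro sum_mono) (auto simp: M5_def)
  finally have mass_\<alpha>: "(\<Sum>(x, y)\<in>?U \<times> ?V. \<alpha> x y) \<le> 1"
    using u_finite by (simp add: sum_pmf_eq_1)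
  have "(\<Sum>(x, y)\<in>?U \<times> ?V. \<beta> x y) = (\<Sum>x\<in>?U. \<Sum>y\<in>?V. \<beta> x y)"
    by (simp add: sum.cartesian_product)
  also have "\<dots> = (\<Sum>y\<in>?V. \<Sum>x\<in>?U. \<beta> x y)"
    by (rule sum.swap)
  also have "\<dots> \<le> (\<Sum>y\<in>?V. pmf v y)"
    using plan by (intro sum_mono) (auto simp: M5_def)
  finally have mass_\<beta>: "(\<Sum>(x, y)\<in>?U \<times> ?V. \<beta> x y) \<le> 1"
    using v_finite by (simp add: sum_pmf_eq_1)
  have "- (\<Sum>(x, y)\<in>?U \<times> ?V. \<alpha> x y) - (\<Sum>(x, y)\<in>?U \<times> ?V. \<beta> x y)
      \<le> (\<Sum>(x, y)\<in>?U \<times> ?V. l1norm (\<alpha> x y *\<^sub>R x - \<beta> x y *\<^sub>R y) - \<alpha> x y - \<beta> x y)"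
    by (simp add: split_def sum_subtractf[symmetric] sum_negf[symmetric] sum_mono l1norm_nonneg)
  then show ?thesis
    unfolding objective5_def using mass_\<alpha> mass_\<beta> by linarith
qed

lemma d5_le_objective5:
  fixes u v :: "(real ^ 'k::finite) pmf"
  assumes "finite (set_pmf u)" "finite (set_pmf v)" "(\<alpha>, \<beta>) \<in> M5 u v"
  shows "d5 u v \<le> objective5 u v \<alpha> \<beta>"
proof -
  have "d5 u v = Inf (case_prod (objective5 u v) ` M5 u v)"
    by (simp add: d5_def objective5_def[abs_def])
  also have "\<dots> \<le> objective5 u v \<alpha> \<beta>"
  proof (rule cInf_lower)
    show "objective5 u v \<alpha> \<beta> \<in> case_prod (objective5 u v) ` M5 u v"
      using assms(3) by force
    show "bdd_below (case_prod (objective5 u v) ` M5 u v)"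
      using objective5_nonneg[OF assms(1,2)] by (intro bdd_belowI[where m=0]) auto
  qed
  finally show ?thesis .
qed

locale M3_coupling =
  fixes u v :: "(real ^ 'k::finite) pmf" and \<gamma> :: "'k quad measure"
  assumes u_finite: "finite (set_pmf u)" and v_finite: "finite (set_pmf v)"
    and coupling: "\<gamma> \<in> M3 u v"
begin

lemma space_coupling: "space \<gamma> = space3"
  using coupling by (simp add: M3_def)

lemma finite_measure_coupling: "finite_measure \<gamma>"
  using coupling by (simp add: M3_def)

lemma measurable_coupling:
  "f \<in> borel_measurable borel \<Longrightarrow> f \<in> borel_measurable \<gamma>"
  using coupling measurable_restrict_space1 by (simp add: M3_def cong: measurable_cong_sets)

lemma integrable_coupling:
  fixes B :: real
  assumes "f \<in> borel_measurable borel" "\<And>p. p \<in> space3 \<Longrightarrow> \<bar>f p\<bar> \<le> B"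
  shows "integrable \<gamma> f"
  using assms space_coupling measurable_coupling
  by (intro finite_measure.integrable_const_bound[OF finite_measure_coupling, where B=B] AE_I2) auto

lemma marginals:
  assumes "continuous_on DeltaK f"
  shows "integral\<^sup>L \<gamma> (\<lambda>p. pt_l p * f (pt_x p)) = measure_pmf.expectation u f"
    and "integral\<^sup>L \<gamma> (\<lambda>p. pt_m p * f (pt_y p)) = measure_pmf.expectation v f"
proof -
  have l: "(\<lambda>(x, y, l, m). l * f x) = (\<lambda>p. pt_l p * f (pt_x p))"
    and m: "(\<lambda>(x, y, l, m). m * f y) = (\<lambda>p. pt_m p * f (pt_y p))"
    by auto
  have "integral\<^sup>L \<gamma> (\<lambda>(x, y, l, m). l * f x) = measure_pmf.expectation u f \<and>
      integral\<^sup>L \<gamma> (\<lambda>(x, y, l, m). m * f y) = measure_pmf.expectation v f"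
    using coupling assms by (simp add: M3_def)
  then show "integral\<^sup>L \<gamma> (\<lambda>p. pt_l p * f (pt_x p)) = measure_pmf.expectation u f"
    and "integral\<^sup>L \<gamma> (\<lambda>p. pt_m p * f (pt_y p)) = measure_pmf.expectation v f"
    unfolding l m by simp_all
qed

sublocale u_marginal: weighted_marginal \<gamma> pt_l pt_x u
proof (intro weighted_marginal.intro[OF finite_measure_coupling] weighted_marginal_axioms.intro)
qed (use space3_coordinates space_coupling u_finite marginals(1)[OF continuous_on_subset]
  in \<open>auto intro!: measurable_coupling borel_measurable_continuous_onI continuous_intros\<close>)

sublocale v_marginal: weighted_marginal \<gamma> pt_m pt_y v
proof (intro weighted_marginal.intro[OF finite_measure_coupling] weighted_marginal_axioms.intro)
qed (use space3_coordinates space_coupling v_finite marginals(2)[OF continuous_on_subset]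
  in \<open>auto intro!: measurable_coupling borel_measurable_continuous_onI continuous_intros\<close>)

definition alpha :: "real ^ 'k \<Rightarrow> real ^ 'k \<Rightarrow> real" where
  "alpha a b = integral\<^sup>L \<gamma> (\<lambda>p. pt_l p * cell a b p)"

definition beta :: "real ^ 'k \<Rightarrow> real ^ 'k \<Rightarrow> real" where
  "beta a b = integral\<^sup>L \<gamma> (\<lambda>p. pt_m p * cell a b p)"

lemma cell_measurable_coupling: "cell a b \<in> borel_measurable \<gamma>"
  by (rule measurable_coupling[OF cell_measurable])

lemma integrable_weighted_cell:
  "integrable \<gamma> (\<lambda>p. pt_l p * cell a b p)" "integrable \<gamma> (\<lambda>p. pt_m p * cell a b p)"
  by (intro u_marginal.integrable_weighted v_marginal.integrable_weighted
      cell_measurable_coupling; simp add: cell_def)+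

lemma integrable_cost: "integrable \<gamma> cost3" "integrable \<gamma> (\<lambda>p. cell a b p * cost3 p)"
proof -
  have cost_measurable: "cost3 \<in> borel_measurable borel"
    by (rule borel_measurable_continuous_onI[OF cost3_continuous])
  have cost_bound: "\<bar>cost3 p\<bar> \<le> 2" if "p \<in> space3" for p
    using cost3_bounds(2)[OF that] cost3_nonneg[of p] by simp
  show "integrable \<gamma> cost3"
    using cost_bound by (intro integrable_coupling[OF cost_measurable])
  show "integrable \<gamma> (\<lambda>p. cell a b p * cost3 p)"
  proof (rule integrable_coupling)
    show "(\<lambda>p. cell a b p * cost3 p) \<in> borel_measurable borel"
      using cell_measurable cost_measurable by (rule borel_measurable_times)
    show "\<bar>cell a b p * cost3 p\<bar> \<le> 2" if "p \<in> space3" for p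
      using cost_bound[OF that] by (simp add: cell_def abs_mult indicator_def)
  qed
qed

(* (alpha, beta) is admissible for d_5: the row sum of alpha at a is the l-weight that gamma
   puts on {x = a}, which is at most u{a}; symmetrically for beta. *)
lemma plan_in_M5: "(alpha, beta) \<in> M5 u v"
proof -
  have nonneg: "0 \<le> alpha a b \<and> 0 \<le> beta a b" for a b
    unfolding alpha_def beta_def using space_coupling
    by (auto intro!: integral_nonneg_AE AE_I2 mult_nonneg_nonneg simp: cell_def space3_def)
  have row: "(\<Sum>b\<in>set_pmf v. alpha a b) \<le> pmf u a" for a
  proof -
    have "(\<Sum>b\<in>set_pmf v. alpha a b) = integral\<^sup>L \<gamma> (\<lambda>p. pt_l p * (\<Sum>b\<in>set_pmf v. cell a b p))"
      by (simp add: alpha_def sum_distrib_left integrable_weighted_cell)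
    also have "\<dots> \<le> pmf u a"
    proof (rule u_marginal.atom_weight_le)
      show "(\<lambda>p. \<Sum>b\<in>set_pmf v. cell a b p) \<in> borel_measurable \<gamma>"
        by (intro borel_measurable_sum cell_measurable_coupling)
      show "0 \<le> (\<Sum>b\<in>set_pmf v. cell a b p) \<and> (\<Sum>b\<in>set_pmf v. cell a b p) \<le> indicator {a} (pt_x p)" for p
        using v_finite by (simp add: sum_cells_row indicator_def)
    qed
    finally show ?thesis .
  qed
  have column: "(\<Sum>a\<in>set_pmf u. beta a b) \<le> pmf v b" for b
  proof -
    have "(\<Sum>a\<in>set_pmf u. beta a b) = integral\<^sup>L \<gamma> (\<lambda>p. pt_m p * (\<Sum>a\<in>set_pmf u. cell a b p))"
      by (simp add: beta_def sum_distrib_left integrable_weighted_cell)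
    also have "\<dots> \<le> pmf v b"
    proof (rule v_marginal.atom_weight_le)
      show "(\<lambda>p. \<Sum>a\<in>set_pmf u. cell a b p) \<in> borel_measurable \<gamma>"
        by (intro borel_measurable_sum cell_measurable_coupling)
      show "0 \<le> (\<Sum>a\<in>set_pmf u. cell a b p) \<and> (\<Sum>a\<in>set_pmf u. cell a b p) \<le> indicator {b} (pt_y p)" for p
        using u_finite by (simp add: sum_cells_column indicator_def)
    qed
    finally show ?thesis .
  qed
  show ?thesis
    unfolding M5_def using nonneg row column by auto
qed

(* On a single cell, the d_5 cost of (alpha, beta) is at most the d_3 cost of gamma there, by
   Jensen for the l1-norm. *)
lemma cell_cost_bound:
  "l1norm (alpha a b *\<^sub>R a - beta a b *\<^sub>R b) \<le> integral\<^sup>L \<gamma> (\<lambda>p. cell a b p * cost3 p)"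
proof -
  define F where "F p = cell a b p *\<^sub>R (pt_l p *\<^sub>R a - pt_m p *\<^sub>R b)" for p
  have F_component: "F p $ k = pt_l p * cell a b p * a $ k - pt_m p * cell a b p * b $ k" for p k
    by (simp add: F_def algebra_simps)
  have F_integrable: "integrable \<gamma> (\<lambda>p. F p $ k)" for k
    unfolding F_component using integrable_weighted_cell by auto
  have "alpha a b *\<^sub>R a - beta a b *\<^sub>R b = (\<chi> k. integral\<^sup>L \<gamma> (\<lambda>p. F p $ k))"
    unfolding F_component using integrable_weighted_cell
    by (simp add: vec_eq_iff alpha_def beta_def Bochner_Integration.integral_diff)
  then have "l1norm (alpha a b *\<^sub>R a - beta a b *\<^sub>R b) \<le> integral\<^sup>L \<gamma> (\<lambda>p. l1norm (F p))"
    using l1norm_integral_le[OF F_integrable] by simp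
  also have "(\<lambda>p. l1norm (F p)) = (\<lambda>p. cell a b p * cost3 p)"
    by (auto simp: F_def cell_eq l1norm_scaleR cost3_def indicator_def)
  finally show ?thesis .
qed

(* Integrating the pointwise cost split: the total weights are 1 and no weight lies off the
   supports, so the d_3 cost dominates the cell costs minus alpha and beta, plus 2. *)
lemma cost_decomposition:
  "(\<Sum>(a, b)\<in>set_pmf u \<times> set_pmf v.
      integral\<^sup>L \<gamma> (\<lambda>p. cell a b p * cost3 p) - alpha a b - beta a b) + 2 \<le> integral\<^sup>L \<gamma> cost3"
proof -
  let ?U = "set_pmf u" and ?V = "set_pmf v"
  define R where "R p = (\<Sum>(a, b)\<in>?U \<times> ?V. cell a b p * cost3 p - pt_l p * cell a b p - pt_m p * cell a b p)
      + pt_l p + pt_m p - 2 * (pt_l p * indicator (- ?U) (pt_x p))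
      - 2 * (pt_m p * indicator (- ?V) (pt_y p))" for p
  have R_integrable: "integrable \<gamma> R"
    unfolding R_def using integrable_weighted_cell integrable_cost u_marginal.integrable_L
      v_marginal.integrable_L u_marginal.integrable_off_support v_marginal.integrable_off_support
    by (auto simp: case_prod_beta)
  have integral_R: "integral\<^sup>L \<gamma> R = (\<Sum>(a, b)\<in>?U \<times> ?V.
      integral\<^sup>L \<gamma> (\<lambda>p. cell a b p * cost3 p) - alpha a b - beta a b) + 2"
    unfolding R_def alpha_def beta_def
    using integrable_weighted_cell integrable_cost u_marginal.integrable_L
      v_marginal.integrable_L u_marginal.integrable_off_support v_marginal.integrable_off_support
    by (simp add: case_prod_beta Bochner_Integration.integral_diff Bochner_Integration.integral_add
        Bochner_Integration.integral_sum Bochner_Integration.integrable_sum integral_mult_right_zero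
        u_marginal.total_weight v_marginal.total_weight
        u_marginal.no_weight_off_support v_marginal.no_weight_off_support)
  have "integral\<^sup>L \<gamma> R \<le> integral\<^sup>L \<gamma> cost3"
  proof (rule integral_mono[OF R_integrable integrable_cost(1)])
    fix p assume "p \<in> space \<gamma>"
    then have p: "p \<in> space3" by (simp add: space_coupling)
    have "(\<Sum>(a, b)\<in>?U \<times> ?V. cell a b p * cost3 p - pt_l p * cell a b p - pt_m p * cell a b p)
        = (\<Sum>(a, b)\<in>?U \<times> ?V. cell a b p * (cost3 p - pt_l p - pt_m p))"
      by (intro sum.cong) (auto simp: algebra_simps)
    also have "\<dots> = (\<Sum>(a, b)\<in>?U \<times> ?V. cell a b p) * (cost3 p - pt_l p - pt_m p)"
      by (simp add: sum_distrib_right split_def)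
    finally show "R p \<le> cost3 p"
      unfolding R_def using cost_split_pointwise space3_coordinates[OF p] cost3_bounds(1)[OF p]
      by (simp add: sum_cells u_finite v_finite)
  qed
  then show ?thesis
    unfolding integral_R .
qed

lemma objective_le_cost: "objective5 u v alpha beta \<le> integral\<^sup>L \<gamma> cost3"
proof -
  have "objective5 u v alpha beta \<le> 2 + (\<Sum>(a, b)\<in>set_pmf u \<times> set_pmf v.
      integral\<^sup>L \<gamma> (\<lambda>p. cell a b p * cost3 p) - alpha a b - beta a b)"
    unfolding objective5_def using cell_cost_bound by (auto intro!: sum_mono)
  then show ?thesis
    using cost_decomposition by simp
qed

end

theorem lemma5:
  fixes u v :: "(real ^ 'k::finite) pmf"
  assumes "set_pmf u \<subseteq> DeltaK" and "set_pmf v \<subseteq> DeltaK"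
    and "finite (set_pmf u)" and "finite (set_pmf v)"
  shows "d3 u v \<ge> d5 u v"
  unfolding d3_def cost3_case
proof (rule cInf_greatest)
  show "(\<lambda>\<gamma>. integral\<^sup>L \<gamma> cost3) ` M3 u v \<noteq> {}"
    using M3_nonempty[OF assms(1,2)] by simp
  fix z assume "z \<in> (\<lambda>\<gamma>. integral\<^sup>L \<gamma> cost3) ` M3 u v"
  then obtain \<gamma> where \<gamma>: "\<gamma> \<in> M3 u v" and z: "z = integral\<^sup>L \<gamma> cost3"
    by blast
  interpret M3_coupling u v \<gamma>
    using assms(3,4) \<gamma> by unfold_locales
  have "d5 u v \<le> objective5 u v alpha beta"
    using d5_le_objective5 assms(3,4) plan_in_M5 .
  also have "\<dots> \<le> integral\<^sup>L \<gamma> cost3"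
    by (rule objective_le_cost)
  finally show "d5 u v \<le> z"
    using z by simp
qed

end
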